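(* Let $X$ be a Tychonoff space and $AP(X)$ its free abelian precompact group. If $X$ is not reversible, then $AP(X)$ is not $g$-reversible.
   Context: All topological groups are assumed Hausdorff. A topological space $X$ is reversible if every continuous bijection of $X$ onto itself is open. A topological group $G$ is called $g$-reversible if every continuous automorphism of $G$ (i.e. every continuous group isomorphism of $G$ onto itself) is an open map. For a Tychonoff space $X$, the free abelian precompact group $AP(X)$ is the free abelian group on the set $X$ equipped with the initial group topology generated by all homomorphisms $AP(X)\to\mathbb{T}=\mathbb{R}/\mathbb{Z}$ whose restriction to $X$ is continuous; it is a Hausdorff precompact abelian group containing $X$ as a topological subspace, and every continuous map from $X$ into a precompact abelian group extends uniquely to a continuous homomorphism on $AP(X)$. *)

theory Defs
  imports "HOL-Analysis.Analysis" "HOL-Algebra.Free_Abelian_Groups"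
begin

definition Tychonoff_space :: "'a topology \<Rightarrow> bool" where
  "Tychonoff_space X \<longleftrightarrow> completely_regular_space X \<and> Hausdorff_space X"

definition reversible :: "'a topology \<Rightarrow> bool" where
  "reversible X \<longleftrightarrow>
     (\<forall>f. continuous_map X X f \<and> bij_betw f (topspace X) (topspace X) \<longrightarrow> open_map X X f)"

definition g_reversible :: "('g, 'm) monoid_scheme \<Rightarrow> 'g topology \<Rightarrow> bool" where
  "g_reversible G T \<longleftrightarrow>
     (\<forall>f. f \<in> iso G G \<and> continuous_map T T f \<longrightarrow> open_map T T f)"

text \<open>The circle group \<open>\<bbbT> = \<real>/\<int>\<close>, realised (isomorphically, as a topological group)
  as the unit circle in \<open>\<complex>\<close> under multiplication.\<close>
definition circle_group :: "complex monoid" where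
  "circle_group = \<lparr>carrier = sphere 0 1, monoid.mult = (*), one = 1\<rparr>"

definition circle_top :: "complex topology" where
  "circle_top = top_of_set (sphere 0 1)"

definition AP_chars :: "'a topology \<Rightarrow> (('a \<Rightarrow>\<^sub>0 int) \<Rightarrow> complex) set" where
  "AP_chars X = {\<phi>. \<phi> \<in> hom (free_Abelian_group (topspace X)) circle_group \<and>
                     continuous_map X circle_top (\<lambda>x. \<phi> (frag_of x))}"

definition AP_topology :: "'a topology \<Rightarrow> ('a \<Rightarrow>\<^sub>0 int) topology" where
  "AP_topology X =
     subtopology
       (topology_generated_by {\<phi> -` U | \<phi> U. \<phi> \<in> AP_chars X \<and> openin circle_top U})
       (carrier (free_Abelian_group (topspace X)))"

end

theory Submission
  imports Defs
begin

text \<open>A continuous bijection \<open>f\<close> of \<open>X\<close> extends linearly to a continuous automorphism \<open>F\<close>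
  of \<open>AP(X)\<close>, continuous because composing a continuous character with \<open>F\<close> gives again
  a continuous character. Since \<open>X\<close> is completely regular, characters separate points
  from closed sets, so every open \<open>V \<subseteq> X\<close> is the trace on \<open>X\<close> of an open \<open>W \<subseteq> AP(X)\<close>.
  If \<open>F\<close> were open, \<open>f V\<close> would be the trace of the open set \<open>F W\<close>, hence open in \<open>X\<close>;
  so a non-open \<open>f\<close> yields a non-open \<open>F\<close>.\<close>

lemma comm_group_circle_group: "comm_group circle_group"
proof (rule comm_groupI)
  show "\<exists>y\<in>carrier circle_group. y \<otimes>\<^bsub>circle_group\<^esub> x = \<one>\<^bsub>circle_group\<^esub>"
    if "x \<in> carrier circle_group" for x
  proof -
    from that have x: "norm x = 1" by (simp add: circle_group_def)
    then have "x \<noteq> 0" by auto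
    moreover have "norm (inverse x) = 1" using x by (simp add: norm_inverse)
    ultimately show ?thesis by (intro bexI[of _ "inverse x"]) (auto simp: circle_group_def)
  qed
qed (auto simp: circle_group_def norm_mult)

lemma const_one_in_AP_chars: "(\<lambda>_. 1) \<in> AP_chars X"
proof -
  have "(\<lambda>_. 1) \<in> hom (free_Abelian_group (topspace X)) circle_group"
    by (rule homI) (simp_all add: circle_group_def)
  moreover have "continuous_map X circle_top (\<lambda>x. 1)"
    unfolding circle_top_def by (simp add: continuous_map_in_subtopology)
  ultimately show ?thesis unfolding AP_chars_def by simp
qed

lemma Union_AP_subbasis:
  "\<Union>{\<phi> -` U | \<phi> U. \<phi> \<in> AP_chars X \<and> openin circle_top U} = UNIV"
proof -
  have const_one: "(\<lambda>_. 1::complex) -` topspace circle_top = UNIV"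
    by (simp add: circle_top_def)
  have "(\<lambda>_. 1::complex) -` topspace circle_top \<in> {\<phi> -` U | \<phi> U. \<phi> \<in> AP_chars X \<and> openin circle_top U}"
    using const_one_in_AP_chars[of X] openin_topspace[of circle_top] by blast
  then show ?thesis
    unfolding const_one by (intro top.extremum_uniqueI Union_upper)
qed

lemma topspace_AP_topology:
  "topspace (AP_topology X) = carrier (free_Abelian_group (topspace X))"
  unfolding AP_topology_def topspace_subtopology topology_generated_by_topspace Union_AP_subbasis
  by simp

lemma openin_AP_topology_char_preimage:
  assumes "\<phi> \<in> AP_chars X" "openin circle_top U"
  shows "openin (AP_topology X) (\<phi> -` U \<inter> carrier (free_Abelian_group (topspace X)))"
proof -
  have "openin (topology_generated_by {\<phi> -` U | \<phi> U. \<phi> \<in> AP_chars X \<and> openin circle_top U})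
          (\<phi> -` U)"
    using assms by (intro topology_generated_by_Basis) blast
  then show ?thesis unfolding AP_topology_def openin_subtopology by blast
qed

lemma continuous_map_AP_char:
  assumes "\<phi> \<in> AP_chars X"
  shows "continuous_map (AP_topology X) circle_top \<phi>"
proof -
  have "\<phi> \<in> hom (free_Abelian_group (topspace X)) circle_group"
    using assms by (simp add: AP_chars_def)
  then have "\<phi> \<in> topspace (AP_topology X) \<rightarrow> topspace circle_top"
    unfolding topspace_AP_topology by (auto simp: circle_top_def circle_group_def dest: hom_in_carrier)
  moreover have "openin (AP_topology X) {c \<in> topspace (AP_topology X). \<phi> c \<in> U}"
    if "openin circle_top U" for U
  proof -
    have "{c \<in> topspace (AP_topology X). \<phi> c \<in> U}
        = \<phi> -` U \<inter> carrier (free_Abelian_group (topspace X))"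
      unfolding topspace_AP_topology by blast
    then show ?thesis using openin_AP_topology_char_preimage[OF assms that] by simp
  qed
  ultimately show ?thesis by (simp add: continuous_map image_subset_iff_funcset)
qed

lemma continuous_map_into_AP_topology:
  assumes h: "h \<in> topspace T \<rightarrow> carrier (free_Abelian_group (topspace X))"
    and chars: "\<And>\<phi>. \<phi> \<in> AP_chars X \<Longrightarrow> continuous_map T circle_top (\<phi> \<circ> h)"
  shows "continuous_map T (AP_topology X) h"
  unfolding AP_topology_def continuous_map_in_subtopology
proof (intro conjI continuous_on_generated_topo h)
  fix U assume "U \<in> {\<phi> -` U | \<phi> U. \<phi> \<in> AP_chars X \<and> openin circle_top U}"
  then obtain \<phi> V where U: "U = \<phi> -` V" and "\<phi> \<in> AP_chars X" "openin circle_top V"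
    by blast
  then have "openin T {x \<in> topspace T. (\<phi> \<circ> h) x \<in> V}"
    using chars openin_continuous_map_preimage by blast
  moreover have "{x \<in> topspace T. (\<phi> \<circ> h) x \<in> V} = h -` U \<inter> topspace T"
    unfolding U by auto
  ultimately show "openin T (h -` U \<inter> topspace T)" by simp
qed (simp add: Union_AP_subbasis)

lemma continuous_map_frag_of_AP_topology: "continuous_map X (AP_topology X) frag_of"
  by (rule continuous_map_into_AP_topology) (simp_all add: AP_chars_def o_def)

text \<open>The character realises \<open>x \<mapsto> cis (\<pi> g x)\<close> for an Urysohn function \<open>g\<close>.\<close>

lemma AP_char_separates_point_closed:
  assumes "completely_regular_space X" "closedin X C" "x \<in> topspace X" "x \<notin> C"
  obtains \<phi> where "\<phi> \<in> AP_chars X" "\<phi> (frag_of x) = 1" "\<And>y. y \<in> C \<Longrightarrow> \<phi> (frag_of y) = -1"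
proof -
  obtain g :: "'a \<Rightarrow> real" where g: "continuous_map X (top_of_set {0..1}) g"
      and g0: "g x = 0" and g1: "g ` C \<subseteq> {1}"
    using assms unfolding completely_regular_space_def by blast
  define h where "h y = cis (pi * g y)" for y
  have "h ` topspace X \<subseteq> carrier circle_group"
    by (auto simp: h_def circle_group_def)
  then obtain \<phi> where \<phi>: "\<phi> \<in> hom (free_Abelian_group (topspace X)) circle_group"
    and \<phi>_frag_of: "\<And>y. y \<in> topspace X \<Longrightarrow> \<phi> (frag_of y) = h y"
    using comm_group.free_Abelian_group_universal[OF comm_group_circle_group] by blast
  have "continuous_map X euclideanreal g"
    using g by (simp add: continuous_map_in_subtopology)
  then have "continuous_map X euclidean h"
    unfolding h_def
    by (intro continuous_map_compose[of _ _ g _ "\<lambda>t. cis (pi * t)", unfolded o_def])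
      (auto intro!: continuous_intros)
  then have "continuous_map X circle_top h"
    unfolding circle_top_def h_def by (auto simp: continuous_map_in_subtopology)
  then have "continuous_map X circle_top (\<lambda>y. \<phi> (frag_of y))"
    by (rule continuous_map_eq) (simp add: \<phi>_frag_of)
  with \<phi> have "\<phi> \<in> AP_chars X" by (simp add: AP_chars_def)
  moreover have "\<phi> (frag_of y) = -1" if "y \<in> C" for y
  proof -
    have "y \<in> topspace X" "g y = 1"
      using that g1 closedin_subset[OF assms(2)] by auto
    then show ?thesis by (simp add: \<phi>_frag_of h_def)
  qed
  ultimately show ?thesis
    using that assms(3) by (simp add: \<phi>_frag_of h_def g0)
qed

lemma openin_AP_topology_trace:
  assumes "completely_regular_space X" "openin X V"
  obtains W where "openin (AP_topology X) W" "V = {y \<in> topspace X. frag_of y \<in> W}"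
proof -
  define W where "W = \<Union>{W. openin (AP_topology X) W \<and> (\<forall>y\<in>topspace X. frag_of y \<in> W \<longrightarrow> y \<in> V)}"
  have "openin (AP_topology X) W" unfolding W_def by (rule openin_Union) blast
  moreover have "frag_of x \<in> W" if x: "x \<in> V" for x
  proof -
    have "closedin X (topspace X - V)" "x \<in> topspace X"
      using assms(2) x openin_subset by blast+
    then obtain \<phi> where \<phi>: "\<phi> \<in> AP_chars X" "\<phi> (frag_of x) = 1"
      and \<phi>_outside: "\<And>y. y \<in> topspace X - V \<Longrightarrow> \<phi> (frag_of y) = -1"
      using AP_char_separates_point_closed[OF assms(1)] x by blast
    have half_circle: "openin circle_top (sphere 0 1 \<inter> {z. Re z > 0})"
      unfolding circle_top_def by (intro openin_open_Int open_halfspace_Re_gt)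
    define N where "N = \<phi> -` (sphere 0 1 \<inter> {z. Re z > 0}) \<inter> carrier (free_Abelian_group (topspace X))"
    have "openin (AP_topology X) N"
      unfolding N_def by (rule openin_AP_topology_char_preimage[OF \<phi>(1) half_circle])
    moreover have "y \<in> V" if "y \<in> topspace X" "frag_of y \<in> N" for y
      using that \<phi>_outside[of y] by (force simp: N_def)
    moreover have "frag_of x \<in> N"
      using \<open>x \<in> topspace X\<close> \<phi>(2) by (simp add: N_def)
    ultimately show ?thesis unfolding W_def by blast
  qed
  ultimately show ?thesis
    using that openin_subset[OF assms(2)] unfolding W_def by blast
qed

lemma frag_extend_frag_of_in_hom:
  assumes "f ` S \<subseteq> T"
  shows "frag_extend (frag_of \<circ> f) \<in> hom (free_Abelian_group S) (free_Abelian_group T)"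
proof (rule homI)
  show "frag_extend (frag_of \<circ> f) c \<in> carrier (free_Abelian_group T)"
    if "c \<in> carrier (free_Abelian_group S)" for c
    using that assms keys_frag_extend[of "frag_of \<circ> f" c] by (simp; blast)
qed (simp add: frag_extend_add)

lemma frag_extend_frag_of_left_inverse:
  assumes "Poly_Mapping.keys c \<subseteq> S" "\<And>x. x \<in> S \<Longrightarrow> g (f x) = x"
  shows "frag_extend (frag_of \<circ> g) (frag_extend (frag_of \<circ> f) c) = c"
proof -
  have "frag_extend (frag_of \<circ> g) (frag_extend (frag_of \<circ> f) c) = frag_extend (frag_of \<circ> (g \<circ> f)) c"
    by (simp add: frag_extend_compose o_assoc)
  also have "\<dots> = frag_extend frag_of c"
    using assms by (intro frag_extend_eq) auto
  finally show ?thesis by (simp flip: frag_expansion)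
qed

lemma frag_extend_frag_of_in_iso:
  assumes "bij_betw f S T"
  shows "frag_extend (frag_of \<circ> f) \<in> iso (free_Abelian_group S) (free_Abelian_group T)"
proof (rule group_isomorphisms_imp_iso)
  have "f ` S \<subseteq> T" "inv_into S f ` T \<subseteq> S"
    using assms by (auto simp: bij_betw_def inv_into_into)
  moreover have "\<And>x. x \<in> S \<Longrightarrow> inv_into S f (f x) = x" "\<And>y. y \<in> T \<Longrightarrow> f (inv_into S f y) = y"
    using assms by (auto simp: bij_betw_def f_inv_into_f)
  ultimately show "group_isomorphisms (free_Abelian_group S) (free_Abelian_group T)
      (frag_extend (frag_of \<circ> f)) (frag_extend (frag_of \<circ> inv_into S f))"
    unfolding group_isomorphisms_def
    by (auto simp: frag_extend_frag_of_in_hom frag_extend_frag_of_left_inverse)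
qed

lemma continuous_map_AP_topology_frag_extend:
  assumes f: "continuous_map X Y f"
  shows "continuous_map (AP_topology X) (AP_topology Y) (frag_extend (frag_of \<circ> f))"
    (is "continuous_map _ _ ?F")
proof (rule continuous_map_into_AP_topology)
  have F: "?F \<in> hom (free_Abelian_group (topspace X)) (free_Abelian_group (topspace Y))"
    using f by (intro frag_extend_frag_of_in_hom) (simp add: continuous_map_image_subset_topspace)
  then show "?F \<in> topspace (AP_topology X) \<rightarrow> carrier (free_Abelian_group (topspace Y))"
    by (simp add: topspace_AP_topology hom_def)
  fix \<phi> assume \<phi>: "\<phi> \<in> AP_chars Y"
  have "\<phi> \<circ> ?F \<in> hom (free_Abelian_group (topspace X)) circle_group"
    using \<phi> F by (auto simp: AP_chars_def intro: hom_compose)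
  moreover have "continuous_map X circle_top ((\<lambda>y. \<phi> (frag_of y)) \<circ> f)"
    using \<phi> f by (auto simp: AP_chars_def intro: continuous_map_compose)
  ultimately have "\<phi> \<circ> ?F \<in> AP_chars X"
    by (simp add: AP_chars_def o_def)
  then show "continuous_map (AP_topology X) circle_top (\<phi> \<circ> ?F)"
    by (rule continuous_map_AP_char)
qed

lemma open_map_of_open_map_AP_topology_frag_extend:
  assumes X: "completely_regular_space X"
    and f: "bij_betw f (topspace X) (topspace Y)"
    and F_open: "open_map (AP_topology X) (AP_topology Y) (frag_extend (frag_of \<circ> f))"
  shows "open_map X Y f"
  unfolding open_map_def
proof (intro allI impI)
  let ?F = "frag_extend (frag_of \<circ> f)"
  fix V assume "openin X V"
  then obtain W where W: "openin (AP_topology X) W" and V: "V = {y \<in> topspace X. frag_of y \<in> W}"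
    by (rule openin_AP_topology_trace[OF X])
  have "inj_on ?F (carrier (free_Abelian_group (topspace X)))"
    using frag_extend_frag_of_in_iso[OF f] by (simp add: iso_def bij_betw_def)
  moreover have "W \<subseteq> carrier (free_Abelian_group (topspace X))"
    using openin_subset[OF W] by (simp add: topspace_AP_topology)
  ultimately have W_iff: "frag_of v \<in> W \<longleftrightarrow> frag_of (f v) \<in> ?F ` W" if "v \<in> topspace X" for v
    using that inj_on_image_mem_iff[of ?F _ "frag_of v" W] by simp
  have image_V: "f ` V = {y \<in> topspace Y. frag_of y \<in> ?F ` W}"
  proof (intro subset_antisym subsetI)
    fix y assume y: "y \<in> {y \<in> topspace Y. frag_of y \<in> ?F ` W}"
    then obtain v where v: "v \<in> topspace X" and y_eq: "y = f v"
      using f unfolding bij_betw_def by blast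
    then have "frag_of v \<in> W"
      using W_iff y by simp
    with v have "v \<in> V" by (simp add: V)
    then show "y \<in> f ` V" unfolding y_eq by (rule imageI)
  next
    fix y assume "y \<in> f ` V"
    then obtain v where v: "v \<in> topspace X" "frag_of v \<in> W" and y_eq: "y = f v"
      unfolding V by blast
    then have "frag_of y \<in> ?F ` W"
      using W_iff by simp
    moreover have "y \<in> topspace Y"
      using f v(1) unfolding y_eq by (rule bij_betw_apply)
    ultimately show "y \<in> {y \<in> topspace Y. frag_of y \<in> ?F ` W}" by simp
  qed
  have "openin (AP_topology Y) (?F ` W)"
    using F_open W by (simp add: open_map_def)
  with continuous_map_frag_of_AP_topology have "openin Y {y \<in> topspace Y. frag_of y \<in> ?F ` W}"
    by (rule openin_continuous_map_preimage)
  then show "openin Y (f ` V)"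
    by (simp only: image_V)
qed

theorem theorem6p2:
  fixes X :: "'a topology"
  assumes "Tychonoff_space X"
    and "\<not> reversible X"
  shows "\<not> g_reversible (free_Abelian_group (topspace X)) (AP_topology X)"
proof
  assume g_rev: "g_reversible (free_Abelian_group (topspace X)) (AP_topology X)"
  obtain f where f_cont: "continuous_map X X f" and f_bij: "bij_betw f (topspace X) (topspace X)"
    and f_not_open: "\<not> open_map X X f"
    using assms(2) unfolding reversible_def by blast
  let ?F = "frag_extend (frag_of \<circ> f)"
  have "?F \<in> iso (free_Abelian_group (topspace X)) (free_Abelian_group (topspace X))"
    using f_bij by (rule frag_extend_frag_of_in_iso)
  moreover have "continuous_map (AP_topology X) (AP_topology X) ?F"
    using f_cont by (rule continuous_map_AP_topology_frag_extend)
  ultimately have "open_map (AP_topology X) (AP_topology X) ?F"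
    using g_rev by (simp add: g_reversible_def)
  moreover have "completely_regular_space X"
    using assms(1) by (simp add: Tychonoff_space_def)
  ultimately have "open_map X X f"
    using open_map_of_open_map_AP_topology_frag_extend[OF _ f_bij] by simp
  with f_not_open show False ..
qed

end
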